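(* Let $n\ge 2$, $f\in\mathfrak{F}_{sc}$, and let $\rho$ be a density matrix on $\mathbb{C}^n$ whose diagonal entries $\rho_{11},\dots,\rho_{nn}$ are all strictly positive. Let $CM(\rho)=\Delta(\rho)^{-1/2}\rho\,\Delta(\rho)^{-1/2}$. If $CM(\rho)$ is a convex combination of rank-one correlation matrices, then there exists a pure state decomposition $\mathfrak{D}$ of $\rho$ with $\bar C_f(\mathfrak{D})=f(\rho_{11},\rho_{22},\dots,\rho_{nn})$.
   Context: Fix the reference orthonormal basis $\{|i\rangle\}_{i=1}^n$ of $\mathbb{C}^n$. Let $\Omega$ be the probability simplex in $\mathbb{R}^n$. $\mathfrak{F}_{sc}$ denotes the set of functions $f:\Omega\to\mathbb{R}$ such that (i) $f((1,0,\dots,0)^T)=0$; (ii) $f(P\mathbf{x})=f(\mathbf{x})$ for every permutation matrix $P$; (iii) $f$ is concave. For a unit vector $|\psi\rangle=\sum_i\psi_i|i\rangle$, $C_f(|\psi\rangle)=f(|\psi_1|^2,\dots,|\psi_n|^2)$. A pure state decomposition of $\rho$ is a finite family $\{p_k,|\psi_k\rangle\}$ with $p_k>0$, $\sum_kp_k=1$, unit vectors $|\psi_k\rangle$ and $\rho=\sum_kp_k|\psi_k\rangle\langle\psi_k|$; its average coherence is $\bar C_f(\mathfrak{D})=\sum_kp_kC_f(|\psi_k\rangle)$. $\Delta(X)$ is the diagonal matrix with the same diagonal entries as $X$ in the reference basis. A correlation matrix is a positive semidefinite matrix all of whose diagonal entries equal $1$. *)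

theory Defs
  imports "HOL-Analysis.Analysis"
begin

text \<open>Finite dimensional setting: C^n is complex^'n, the reference basis is the
standard basis (axis i 1), matrices are complex^'n^'n.\<close>

definition prob_simplex :: "(real^'n) set" where
  "prob_simplex = {x. (\<forall>i. 0 \<le> x$i) \<and> (\<Sum>i\<in>UNIV. x$i) = 1}"

text \<open>Permutation matrices act on R^n by permuting coordinates.\<close>
definition perm_vec :: "('n \<Rightarrow> 'n) \<Rightarrow> real^'n \<Rightarrow> real^'n" where
  "perm_vec \<sigma> x = (\<chi> i. x $ (\<sigma> i))"

definition F_sc :: "(real^'n \<Rightarrow> real) set" where
  "F_sc = {f. (\<forall>i. f (axis i 1) = 0)
            \<and> (\<forall>\<sigma> x. \<sigma> permutes UNIV \<longrightarrow> x \<in> prob_simplex \<longrightarrow> f (perm_vec \<sigma> x) = f x)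
            \<and> concave_on prob_simplex f}"

definition coh :: "(real^'n \<Rightarrow> real) \<Rightarrow> complex^'n \<Rightarrow> real" where
  "coh f \<psi> = f (\<chi> i. (cmod (\<psi>$i))\<^sup>2)"

definition psd :: "complex^'n^'n \<Rightarrow> bool" where
  "psd A \<longleftrightarrow> (\<forall>i j. A$i$j = cnj (A$j$i)) \<and>
     (\<forall>x::complex^'n. 0 \<le> Re (\<Sum>i\<in>UNIV. \<Sum>j\<in>UNIV. cnj (x$i) * A$i$j * x$j))"

definition density_matrix :: "complex^'n^'n \<Rightarrow> bool" where
  "density_matrix \<rho> \<longleftrightarrow> psd \<rho> \<and> (\<Sum>i\<in>UNIV. \<rho>$i$i) = 1"

definition correlation_matrix :: "complex^'n^'n \<Rightarrow> bool" where
  "correlation_matrix A \<longleftrightarrow> psd A \<and> (\<forall>i. A$i$i = 1)"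

definition proj :: "complex^'n \<Rightarrow> complex^'n^'n" where
  "proj \<psi> = (\<chi> i j. \<psi>$i * cnj (\<psi>$j))"

definition diag_inv_sqrt :: "complex^'n^'n \<Rightarrow> complex^'n^'n" where
  "diag_inv_sqrt \<rho> = (\<chi> i j. if i = j then complex_of_real (1 / sqrt (Re (\<rho>$i$i))) else 0)"

definition CM :: "complex^'n^'n \<Rightarrow> complex^'n^'n" where
  "CM \<rho> = diag_inv_sqrt \<rho> ** \<rho> ** diag_inv_sqrt \<rho>"

text \<open>Pure state decomposition, given as a finite family indexed by {..<K}.\<close>
definition pure_state_decomp :: "complex^'n^'n \<Rightarrow> nat \<Rightarrow> (nat \<Rightarrow> real) \<Rightarrow> (nat \<Rightarrow> complex^'n) \<Rightarrow> bool" where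
  "pure_state_decomp \<rho> K p \<psi> \<longleftrightarrow>
     (\<forall>k<K. p k > 0 \<and> norm (\<psi> k) = 1) \<and> (\<Sum>k<K. p k) = 1 \<and>
     \<rho> = (\<Sum>k<K. p k *\<^sub>R proj (\<psi> k))"

definition avg_coh :: "(real^'n \<Rightarrow> real) \<Rightarrow> nat \<Rightarrow> (nat \<Rightarrow> real) \<Rightarrow> (nat \<Rightarrow> complex^'n) \<Rightarrow> real" where
  "avg_coh f K p \<psi> = (\<Sum>k<K. p k * coh f (\<psi> k))"

end

theory Submission imports Defs begin

text \<open>A rank-one correlation matrix is the projector onto a vector with unimodular
entries. Rescaling the entries of these vectors by the square roots of the diagonal
of \<rho> turns a convex decomposition of CM \<rho> into rank-one correlation matrices into a
pure state decomposition of \<rho> in which the squared moduli of the entries of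
every state form the diagonal of \<rho>. All these states have the same coherence, so the
average is f of that diagonal for any function f.\<close>

lemma rank_1_row_multiple:
  fixes A :: "'a::field^'n^'m"
  assumes "rank A = 1" "A$i0 \<noteq> 0"
  shows "\<exists>c. A$i = c *s A$i0"
proof (rule ccontr)
  assume no_multiple: "\<nexists>c. A$i = c *s A$i0"
  have "A$i \<notin> vec.span {A$i0}" using no_multiple by (auto simp: vec.span_singleton)
  moreover have "vec.independent {A$i0}" using assms(2) by (simp add: vec.independent_insert)
  ultimately have indep: "vec.independent {A$i, A$i0}" by (simp add: vec.independent_insert)
  have distinct: "A$i \<noteq> A$i0" using no_multiple by (metis vector_smult_lid)
  have "{A$i, A$i0} \<subseteq> rows A" by (auto simp: rows_def row_def)
  then have "card {A$i, A$i0} \<le> vec.dim (rows A)"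
    using indep by (rule vec.independent_card_le_dim)
  with distinct assms(1) show False by (simp add: row_rank_def_gen)
qed

lemma rank_1_correlation_matrix_eq_proj:
  fixes A :: "complex^'n^'n"
  assumes "correlation_matrix A" "rank A = 1"
  shows "\<exists>v. A = proj v \<and> (\<forall>i. cmod (v$i) = 1)"
proof -
  fix i0 :: 'n
  have herm: "\<And>i j. A$i$j = cnj (A$j$i)" and diag: "\<And>i. A$i$i = 1"
    using assms(1) unfolding correlation_matrix_def psd_def by blast+
  define r where "r = A$i0"
  have "r \<noteq> 0" using diag[of i0] by (metis r_def zero_index zero_neq_one)
  then obtain c where "\<And>i. A$i = c i *s r"
    using rank_1_row_multiple[OF assms(2)] unfolding r_def by metis
  then have entries: "\<And>i j. A$i$j = c i * r$j" by simp
  have "r$i0 = 1" using diag[of i0] r_def by simp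
  then have c: "c i = cnj (r$i)" for i
    using herm[of i i0] diag[of i0] by (simp add: entries)
  have unimodular: "cmod (r$i) = 1" for i
  proof -
    have "r$i * cnj (r$i) = 1" using diag[of i] by (simp add: entries c mult.commute)
    then have "(cmod (r$i))\<^sup>2 = 1" by (metis complex_norm_square of_real_eq_1_iff)
    then show ?thesis using norm_ge_zero[of "r$i"] by (auto simp: power2_eq_1_iff)
  qed
  show ?thesis
    by (rule exI[of _ "\<chi> i. cnj (r$i)"])
       (simp add: vec_eq_iff proj_def entries c unimodular)
qed

lemma convex_hull_indexed_positive_combination:
  fixes x :: "'a::real_vector"
  assumes "x \<in> convex hull T"
  shows "\<exists>(K::nat) p a. (\<forall>k<K. p k > 0 \<and> a k \<in> T) \<and> (\<Sum>k<K. p k) = 1 \<and> x = (\<Sum>k<K. p k *\<^sub>R a k)"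
proof -
  obtain S u where S: "finite S" "S \<subseteq> T" and u: "\<forall>y\<in>S. 0 \<le> u y" "sum u S = 1"
    and x: "(\<Sum>y\<in>S. u y *\<^sub>R y) = x"
    using assms unfolding convex_hull_explicit by blast
  define S' where "S' = {y\<in>S. u y > 0}"
  have S': "finite S'" "S' \<subseteq> S" using S(1) by (auto simp: S'_def)
  have zero: "\<forall>y\<in>S - S'. u y = 0" using u(1) by (auto simp: S'_def)
  obtain a where a: "bij_betw a {..<card S'} S'"
    using ex_bij_betw_nat_finite[OF S'(1)] by (auto simp: lessThan_atLeast0)
  have "(\<Sum>k<card S'. u (a k)) = 1"
    using u(2) sum.mono_neutral_left[OF S(1) S'(2) zero]
    by (simp add: sum.reindex_bij_betw[OF a])
  moreover have "x = (\<Sum>k<card S'. u (a k) *\<^sub>R a k)"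
    using x sum.mono_neutral_left[OF S(1) S'(2), of "\<lambda>y. u y *\<^sub>R y"] zero
      sum.reindex_bij_betw[OF a, of "\<lambda>y. u y *\<^sub>R y"] by simp
  moreover have "\<forall>k<card S'. u (a k) > 0 \<and> a k \<in> T"
    using a S(2) by (auto simp: bij_betw_def S'_def)
  ultimately show ?thesis
    by - (intro exI[of _ "card S'"] exI[of _ "\<lambda>k. u (a k)"] exI[of _ a], simp)
qed

lemma CM_entry:
  fixes \<rho> :: "complex^'n^'n"
  shows "CM \<rho> $i$j = \<rho>$i$j / (sqrt (Re (\<rho>$i$i)) * sqrt (Re (\<rho>$j$j)))"
proof -
  have if_mult: "\<And>P (a::complex) b. (if P then a else 0) * b = (if P then a * b else 0)"
    "\<And>P (a::complex) b. b * (if P then a else 0) = (if P then b * a else 0)" by simp_all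
  have left: "(diag_inv_sqrt \<rho> ** \<rho>)$i$k = \<rho>$i$k / sqrt (Re (\<rho>$i$i))" for k
    by (simp add: matrix_matrix_mult_def diag_inv_sqrt_def if_mult divide_inverse)
  show ?thesis
    by (simp add: CM_def matrix_matrix_mult_def left diag_inv_sqrt_def if_mult divide_inverse)
qed

lemma proj_scaled_entry:
  fixes v :: "complex^'n" and s :: "'n \<Rightarrow> real"
  shows "proj (\<chi> i. of_real (s i) * v$i) $i$j = of_real (s i * s j) * proj v $i$j"
  by (simp add: proj_def)

lemma norm_eq_1_if_moduli_squared_sum_1:
  fixes \<psi> :: "'a::real_normed_vector^'n"
  assumes "\<And>i. (norm (\<psi>$i))\<^sup>2 = d i" "(\<Sum>i\<in>UNIV. d i) = 1"
  shows "norm \<psi> = 1"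
  using assms by (simp add: norm_vec_def L2_set_def)

lemma pure_state_decomp_with_diagonal_moduli:
  fixes \<rho> :: "complex^'n^'n"
  assumes "density_matrix \<rho>" "\<forall>i. Re (\<rho>$i$i) > 0"
    and "CM \<rho> \<in> convex hull {A. correlation_matrix A \<and> rank A = 1}"
  shows "\<exists>K p \<psi>. pure_state_decomp \<rho> K p \<psi> \<and>
           (\<forall>k<K. \<forall>i. (cmod (\<psi> k $ i))\<^sup>2 = Re (\<rho>$i$i))"
proof -
  define s where "s i = sqrt (Re (\<rho>$i$i))" for i
  have s_pos: "s i > 0" and s_sq: "(s i)\<^sup>2 = Re (\<rho>$i$i)" for i
    using assms(2) by (simp_all add: s_def less_imp_le)
  have diag_sum: "(\<Sum>i\<in>UNIV. Re (\<rho>$i$i)) = 1"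
    using assms(1) unfolding density_matrix_def by (simp flip: Re_sum)
  obtain K :: nat and p A where pA: "\<forall>k<K. p k > 0 \<and> A k \<in> {A. correlation_matrix A \<and> rank A = 1}"
    and p_sum: "(\<Sum>k<K. p k) = 1" and CM_eq: "CM \<rho> = (\<Sum>k<K. p k *\<^sub>R A k)"
    using convex_hull_indexed_positive_combination[OF assms(3)] by blast
  have "\<forall>k<K. \<exists>w. A k = proj w \<and> (\<forall>i. cmod (w$i) = 1)"
    using rank_1_correlation_matrix_eq_proj pA by blast
  then obtain v where v: "\<And>k. k < K \<Longrightarrow> A k = proj (v k) \<and> (\<forall>i. cmod (v k $ i) = 1)"
    by metis
  define \<psi> where "\<psi> k = (\<chi> i. of_real (s i) * v k $ i)" for k
  have moduli: "(cmod (\<psi> k $ i))\<^sup>2 = Re (\<rho>$i$i)" if "k < K" for k i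
    using v[OF that] s_pos[of i] s_sq[of i] by (simp add: \<psi>_def norm_mult)
  have "\<rho>$i$j = (\<Sum>k<K. p k *\<^sub>R proj (\<psi> k)) $i$j" for i j
  proof -
    have "\<rho>$i$j = of_real (s i * s j) * CM \<rho> $i$j"
      using s_pos[of i] s_pos[of j] by (simp add: CM_entry s_def)
    also have "\<dots> = (\<Sum>k<K. p k *\<^sub>R (of_real (s i * s j) * A k $i$j))"
      by (simp add: CM_eq sum_distrib_left)
    also have "\<dots> = (\<Sum>k<K. p k *\<^sub>R proj (\<psi> k)) $i$j"
      using v by (simp add: \<psi>_def proj_scaled_entry)
    finally show ?thesis .
  qed
  then have "\<rho> = (\<Sum>k<K. p k *\<^sub>R proj (\<psi> k))" by (simp add: vec_eq_iff)
  moreover have "\<forall>k<K. norm (\<psi> k) = 1"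
    using moduli by (auto intro: norm_eq_1_if_moduli_squared_sum_1[OF _ diag_sum])
  ultimately show ?thesis
    using pA p_sum moduli unfolding pure_state_decomp_def by blast
qed

lemma avg_coh_eq_if_coh_constant:
  assumes "\<forall>k<K. coh f (\<psi> k) = c" "(\<Sum>k<K. p k) = 1"
  shows "avg_coh f K p \<psi> = c"
  using assms by (simp add: avg_coh_def flip: sum_distrib_right)

theorem theorem2:
  fixes f :: "real^'n \<Rightarrow> real" and \<rho> :: "complex^'n^'n"
  assumes "CARD('n) \<ge> 2"
    and "f \<in> F_sc"
    and "density_matrix \<rho>"
    and "\<forall>i. Re (\<rho>$i$i) > 0"
    and "CM \<rho> \<in> convex hull {A. correlation_matrix A \<and> rank A = 1}"
  shows "\<exists>K p \<psi>. pure_state_decomp \<rho> K p \<psi> \<and>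
           avg_coh f K p \<psi> = f (\<chi> i. Re (\<rho>$i$i))"
proof -
  obtain K p \<psi> where decomp: "pure_state_decomp \<rho> K p \<psi>"
    and moduli: "\<forall>k<K. \<forall>i. (cmod (\<psi> k $ i))\<^sup>2 = Re (\<rho>$i$i)"
    using pure_state_decomp_with_diagonal_moduli[OF assms(3-5)] by blast
  have "\<forall>k<K. coh f (\<psi> k) = f (\<chi> i. Re (\<rho>$i$i))"
    using moduli by (simp add: coh_def)
  then have "avg_coh f K p \<psi> = f (\<chi> i. Re (\<rho>$i$i))"
    using decomp by (intro avg_coh_eq_if_coh_constant) (auto simp: pure_state_decomp_def)
  with decomp show ?thesis by blast
qed

end
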